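(* Let $X,Y$ be real Hilbert spaces, $f:X\to\mathbb{R}$ convex and continuously differentiable, $A:X\to Y$ linear and continuous, $b\in Y$, and assume $S\times M\neq\emptyset$. Let $\varepsilon:[t_{0},+\infty[\ \to\ ]0,+\infty[$ be continuously differentiable with $\lim_{t\to+\infty}\varepsilon(t)=0$, and for each $t\geq t_0$ let $(x_t,\lambda_t)$ be the unique saddle point of $L_t$. Suppose that there exists $\alpha>0$ such that $\|T(x,\lambda)-T(\xi,\eta)\|^{2}\geq\alpha\|(x,\lambda)-(\xi,\eta)\|^{2}$ for all $(x,\lambda),(\xi,\eta)\in X\times Y$. Then, for $(\bar x,\bar\lambda)\in S\times M$, as $t\to+\infty$: \[ \|(x_t,\lambda_t)\|^2=\mathcal{O}\Big(\frac{1}{\alpha+\varepsilon^2(t)}\Big),\qquad \|(x_t,\lambda_t)-(\bar x,\bar\lambda)\|^2=\mathcal{O}\Big(\frac{\varepsilon^2(t)}{\alpha+\varepsilon^2(t)}\Big),\qquad \|(\dot x_t,\dot\lambda_t)\|^2=\mathcal{O}\bigg(\frac{|\dot\varepsilon(t)|^2}{(\alpha+\varepsilon^2(t))^2}\bigg), \] the last estimate holding along the (almost every) $t$ at which $t\mapsto(x_t,\lambda_t)$ is differentiable.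
   Context: $X\times Y$ carries the product inner product $\langle(x,\lambda),(\xi,\eta)\rangle=\langle x,\xi\rangle_X+\langle \lambda,\eta\rangle_Y$ and associated norm $\|\cdot\|$. The Lagrangian is $L(x,\lambda)=f(x)+\langle\lambda,Ax-b\rangle_Y$. $S$ is the set of optimal solutions of $\min\{f(x):Ax=b\}$ and $M\subset Y$ the set of associated Lagrange multipliers; $S\times M$ is exactly the set of saddle points of $L$, equivalently the zero set of the monotone operator $T:X\times Y\to X\times Y$, $T(x,\lambda)=(\nabla f(x)+A^*\lambda,\ b-Ax)$. For $t\ge t_0$, $L_t(x,\lambda)=L(x,\lambda)+\frac{\varepsilon(t)}{2}(\|x\|_X^2-\|\lambda\|_Y^2)$ has a unique saddle point $(x_t,\lambda_t)$, characterized by $T(x_t,\lambda_t)+\varepsilon(t)(x_t,\lambda_t)=0$. The map $t\mapsto(x_t,\lambda_t)$ is Lipschitz on compact intervals, hence differentiable a.e.; $(\dot x_t,\dot\lambda_t)$ denotes its derivative. *)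

theory Defs
  imports "HOL-Analysis.Analysis" "HOL-Library.Landau_Symbols"
begin

definition lagr :: "('a::real_inner \<Rightarrow> real) \<Rightarrow> ('a \<Rightarrow> 'b::real_inner) \<Rightarrow> 'b \<Rightarrow> 'a \<Rightarrow> 'b \<Rightarrow> real" where
  "lagr f A b x l = f x + inner l (A x - b)"

definition lagr_reg :: "('a::real_inner \<Rightarrow> real) \<Rightarrow> ('a \<Rightarrow> 'b::real_inner) \<Rightarrow> 'b \<Rightarrow> real \<Rightarrow> 'a \<Rightarrow> 'b \<Rightarrow> real" where
  "lagr_reg f A b e x l = lagr f A b x l + e / 2 * ((norm x)\<^sup>2 - (norm l)\<^sup>2)"

definition saddle_point :: "('a \<Rightarrow> 'b \<Rightarrow> real) \<Rightarrow> 'a \<times> 'b \<Rightarrow> bool" where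
  "saddle_point F p \<longleftrightarrow> (\<forall>x l. F (fst p) l \<le> F (fst p) (snd p) \<and> F (fst p) (snd p) \<le> F x (snd p))"

definition opT :: "('a::real_inner \<Rightarrow> 'a) \<Rightarrow> ('a \<Rightarrow> 'b::real_inner) \<Rightarrow> ('b \<Rightarrow> 'a) \<Rightarrow> 'b \<Rightarrow> 'a \<times> 'b \<Rightarrow> 'a \<times> 'b" where
  "opT gf A As b p = (gf (fst p) + As (snd p), b - A (fst p))"

end

theory Submission
  imports Defs
begin

text \<open>A saddle point z of the regularized Lagrangian L_e solves T z = - e z, and a saddle point
  of L solves T z = 0. The lower bound alpha |p - q|^2 \<le> |T p - T q|^2 therefore gives
  alpha |z_t - zbar|^2 \<le> eps(t)^2 |z_t|^2, which yields the first two estimates as soon as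
  eps(t)^2 < alpha/4, and alpha |z_s - z_t|^2 \<le> |eps(s) z_s - eps(t) z_t|^2, whose difference
  quotients give alpha |z'|^2 \<le> |eps z' + eps' z|^2 and hence the third.\<close>

lemma has_derivative_inner_extremum_imp_zero:
  fixes F :: "'a::real_inner \<Rightarrow> real"
  assumes "(F has_derivative (\<lambda>h. inner G h)) (at x)"
    and "(\<forall>y. F y \<le> F x) \<or> (\<forall>y. F x \<le> F y)"
  shows "G = 0"
proof -
  have "(\<lambda>h. inner G h) = (\<lambda>h. 0)"
    using differential_zero_maxmin[OF UNIV_I open_UNIV assms(1)] assms(2) by simp
  then have "inner G G = 0" by metis
  then show ?thesis by simp
qed

lemma saddle_point_lagr_reg_imp_opT:
  fixes f :: "'a::real_inner \<Rightarrow> real" and A :: "'a \<Rightarrow> 'b::real_inner"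
  assumes f_grad: "\<And>x. (f has_derivative (\<lambda>h. inner (gf x) h)) (at x)"
    and A_lin: "bounded_linear A"
    and As_adj: "\<And>x y. inner (A x) y = inner x (As y)"
    and saddle: "saddle_point (lagr_reg f A b e) p"
  shows "opT gf A As b p = - (e *\<^sub>R p)"
proof -
  obtain x l where p: "p = (x, l)" by fastforce
  have min_x: "\<forall>y. lagr_reg f A b e x l \<le> lagr_reg f A b e y l"
    and max_l: "\<forall>m. lagr_reg f A b e x m \<le> lagr_reg f A b e x l"
    using saddle unfolding p saddle_point_def by simp_all
  have "((\<lambda>y. lagr_reg f A b e y l) has_derivative (\<lambda>h. inner (gf x + As l + e *\<^sub>R x) h)) (at x)"
  proof (rule has_derivative_eq_rhs)
    show "((\<lambda>y. lagr_reg f A b e y l) has_derivative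
        (\<lambda>h. inner (gf x) h + inner l (A h) + e / 2 * (inner h x + inner x h))) (at x)"
      unfolding lagr_reg_def lagr_def power2_norm_eq_inner
      by (intro derivative_eq_intros) (auto intro: f_grad bounded_linear_imp_has_derivative A_lin)
  qed (simp add: fun_eq_iff As_adj inner_add_left inner_commute[of l] algebra_simps,
      simp add: inner_commute)
  moreover have "((\<lambda>m. lagr_reg f A b e x m) has_derivative (\<lambda>h. inner (A x - b - e *\<^sub>R l) h)) (at l)"
  proof (rule has_derivative_eq_rhs)
    show "((\<lambda>m. lagr_reg f A b e x m) has_derivative
        (\<lambda>h. inner h (A x - b) + e / 2 * (0 - (inner h l + inner l h)))) (at l)"
      unfolding lagr_reg_def lagr_def power2_norm_eq_inner
      by (intro derivative_eq_intros) auto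
  qed (auto simp: fun_eq_iff inner_diff_left inner_commute algebra_simps)
  ultimately have "gf x + As l + e *\<^sub>R x = 0" "A x - b - e *\<^sub>R l = 0"
    using min_x max_l by (metis has_derivative_inner_extremum_imp_zero)+
  then show ?thesis
    unfolding p opT_def by (simp add: algebra_simps eq_neg_iff_add_eq_0)
qed

lemma saddle_point_lagr_imp_opT_eq_0:
  fixes f :: "'a::real_inner \<Rightarrow> real" and A :: "'a \<Rightarrow> 'b::real_inner"
  assumes "\<And>x. (f has_derivative (\<lambda>h. inner (gf x) h)) (at x)"
    and "bounded_linear A"
    and "\<And>x y. inner (A x) y = inner x (As y)"
    and "saddle_point (lagr f A b) p"
  shows "opT gf A As b p = 0"
proof -
  have "lagr f A b = lagr_reg f A b 0" by (simp add: fun_eq_iff lagr_reg_def)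
  with assms show ?thesis using saddle_point_lagr_reg_imp_opT[of f gf A As b 0 p] by simp
qed

lemma norm_add_power2_le:
  fixes a b :: "'a::real_normed_vector"
  shows "(norm (a + b))\<^sup>2 \<le> 2 * (norm a)\<^sup>2 + 2 * (norm b)\<^sup>2"
proof -
  have "(norm (a + b))\<^sup>2 \<le> (norm a + norm b)\<^sup>2"
    by (simp add: norm_triangle_ineq power_mono)
  also have "\<dots> \<le> 2 * (norm a)\<^sup>2 + 2 * (norm b)\<^sup>2"
    using sum_squares_ge_zero[of "norm a - norm b" 0] by (simp add: power2_eq_square algebra_simps)
  finally show ?thesis .
qed

lemma regularization_estimate_bounds:
  fixes z zb :: "'a::real_normed_vector"
  assumes alpha: "0 < alpha" and small: "4 * e\<^sup>2 < alpha"
    and estimate: "alpha * (norm (z - zb))\<^sup>2 \<le> e\<^sup>2 * (norm z)\<^sup>2"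
  shows "(norm (z - zb))\<^sup>2 \<le> 8 * (norm zb)\<^sup>2 * (e\<^sup>2 / (alpha + e\<^sup>2))"
    and "(norm z)\<^sup>2 \<le> 4 * (norm zb)\<^sup>2"
    and "(norm z)\<^sup>2 \<le> 8 * alpha * (norm zb)\<^sup>2 * (1 / (alpha + e\<^sup>2))"
proof -
  define D P Z where "D = (norm (z - zb))\<^sup>2" and "P = (norm z)\<^sup>2" and "Z = (norm zb)\<^sup>2"
  have nonneg: "0 \<le> D" "0 \<le> Z" "0 \<le> e\<^sup>2" by (simp_all add: D_def Z_def)
  have PDZ: "P \<le> 2 * D + 2 * Z"
    using norm_add_power2_le[of "z - zb" zb] by (simp add: D_def P_def Z_def)
  have "alpha * D \<le> e\<^sup>2 * P" using estimate by (simp add: D_def P_def)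
  also have "\<dots> \<le> e\<^sup>2 * (2 * D + 2 * Z)" using PDZ by (intro mult_left_mono) auto
  finally have "alpha * D \<le> 2 * e\<^sup>2 * D + 2 * e\<^sup>2 * Z" by (simp add: algebra_simps)
  moreover have "2 * e\<^sup>2 * D \<le> alpha / 2 * D"
    using small nonneg by (intro mult_right_mono) auto
  ultimately have DZ: "alpha * D \<le> 4 * e\<^sup>2 * Z" by linarith
  have sum: "0 < alpha + e\<^sup>2" "alpha + e\<^sup>2 \<le> 2 * alpha"
    using alpha small by (simp_all add: add_pos_nonneg)
  have "D * (alpha + e\<^sup>2) \<le> 2 * (alpha * D)"
    using sum nonneg mult_left_mono[OF sum(2), of D] by (simp add: algebra_simps)
  also have "\<dots> \<le> 8 * Z * e\<^sup>2" using DZ by (simp add: algebra_simps)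
  finally show "D \<le> 8 * Z * (e\<^sup>2 / (alpha + e\<^sup>2))" using sum by (simp add: field_simps)
  have "4 * e\<^sup>2 * Z \<le> alpha * Z" using small nonneg by (intro mult_right_mono) auto
  with DZ have "alpha * D \<le> alpha * Z" by linarith
  with alpha have "D \<le> Z" by simp
  with PDZ show P4: "P \<le> 4 * Z" by linarith
  have "P * (alpha + e\<^sup>2) \<le> 4 * Z * (2 * alpha)"
    using sum nonneg P4 by (intro mult_mono) auto
  then show "P \<le> 8 * alpha * Z * (1 / (alpha + e\<^sup>2))" using sum by (simp add: field_simps)
qed

lemma regularization_derivative_estimate_bound:
  fixes v z :: "'a::real_normed_vector"
  assumes alpha: "0 < alpha" and small: "4 * e\<^sup>2 < alpha"
    and estimate: "alpha * (norm v)\<^sup>2 \<le> (norm (e *\<^sub>R v + e' *\<^sub>R z))\<^sup>2"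
  shows "(norm v)\<^sup>2 \<le> 16 * alpha * (norm z)\<^sup>2 * (e'\<^sup>2 / (alpha + e\<^sup>2)\<^sup>2)"
proof -
  define V P where "V = (norm v)\<^sup>2" and "P = (norm z)\<^sup>2"
  have nonneg: "0 \<le> V" "0 \<le> P" "0 \<le> e'\<^sup>2" by (simp_all add: V_def P_def)
  have "alpha * V \<le> 2 * e\<^sup>2 * V + 2 * e'\<^sup>2 * P"
    using estimate norm_add_power2_le[of "e *\<^sub>R v" "e' *\<^sub>R z"]
    by (simp add: V_def P_def power_mult_distrib)
  moreover have "2 * e\<^sup>2 * V \<le> alpha / 2 * V"
    using small nonneg by (intro mult_right_mono) auto
  ultimately have VP: "alpha * V \<le> 4 * e'\<^sup>2 * P" by linarith
  have sum: "0 < alpha + e\<^sup>2" "alpha + e\<^sup>2 \<le> 2 * alpha"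
    using alpha small by (simp_all add: add_pos_nonneg)
  then have "(alpha + e\<^sup>2)\<^sup>2 \<le> 4 * alpha\<^sup>2"
    using power_mono[OF sum(2), of 2] by (simp add: power_mult_distrib)
  then have "V * (alpha + e\<^sup>2)\<^sup>2 \<le> V * (4 * alpha\<^sup>2)"
    using nonneg by (intro mult_left_mono)
  also have "\<dots> = 4 * alpha * (alpha * V)" by (simp add: power2_eq_square)
  also have "\<dots> \<le> 4 * alpha * (4 * e'\<^sup>2 * P)"
    using VP alpha by (intro mult_left_mono) auto
  finally show "V \<le> 16 * alpha * P * (e'\<^sup>2 / (alpha + e\<^sup>2)\<^sup>2)"
    using sum by (simp add: field_simps)
qed

lemma has_vector_derivative_imp_tendsto_difference_quotient:
  fixes f :: "real \<Rightarrow> 'a::real_normed_vector"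
  assumes "(f has_vector_derivative D) (at x within S)"
  shows "((\<lambda>y. (f y - f x) /\<^sub>R (y - x)) \<longlongrightarrow> D) (at x within S)"
proof -
  have "((\<lambda>y. norm (f y - f x - (y - x) *\<^sub>R D) / norm (y - x)) \<longlongrightarrow> 0) (at x within S)"
    using assms unfolding has_vector_derivative_def has_derivative_iff_norm by simp
  moreover have "\<forall>\<^sub>F y in at x within S.
      norm (f y - f x - (y - x) *\<^sub>R D) / norm (y - x) = norm ((f y - f x) /\<^sub>R (y - x) - D)"
    unfolding eventually_at_filter
  proof (rule always_eventually, intro allI impI)
    fix y assume "y \<noteq> x"
    then have "f y - f x - (y - x) *\<^sub>R D = (y - x) *\<^sub>R ((f y - f x) /\<^sub>R (y - x) - D)"
      by (simp add: scaleR_right_diff_distrib)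
    then show "norm (f y - f x - (y - x) *\<^sub>R D) / norm (y - x) = norm ((f y - f x) /\<^sub>R (y - x) - D)"
      using \<open>y \<noteq> x\<close> by simp
  qed
  ultimately have "((\<lambda>y. norm ((f y - f x) /\<^sub>R (y - x) - D)) \<longlongrightarrow> 0) (at x within S)"
    by (rule Lim_transform_eventually)
  then show ?thesis
    using tendsto_norm_zero_iff LIM_zero_iff by blast
qed

lemma has_vector_derivative_power2_norm_le:
  fixes p g :: "real \<Rightarrow> 'a::real_normed_vector"
  assumes p: "(p has_vector_derivative v) (at t)" and g: "(g has_vector_derivative w) (at t)"
    and near: "\<forall>\<^sub>F s in at t. alpha * (norm (p s - p t))\<^sup>2 \<le> (norm (g s - g t))\<^sup>2"
  shows "alpha * (norm v)\<^sup>2 \<le> (norm w)\<^sup>2"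
proof (rule tendsto_le[OF trivial_limit_at])
  show "((\<lambda>s. (norm ((g s - g t) /\<^sub>R (s - t)))\<^sup>2) \<longlongrightarrow> (norm w)\<^sup>2) (at t)"
    using has_vector_derivative_imp_tendsto_difference_quotient[OF g] by (intro tendsto_intros)
  show "((\<lambda>s. alpha * (norm ((p s - p t) /\<^sub>R (s - t)))\<^sup>2) \<longlongrightarrow> alpha * (norm v)\<^sup>2) (at t)"
    using has_vector_derivative_imp_tendsto_difference_quotient[OF p] by (intro tendsto_intros)
  show "\<forall>\<^sub>F s in at t.
      alpha * (norm ((p s - p t) /\<^sub>R (s - t)))\<^sup>2 \<le> (norm ((g s - g t) /\<^sub>R (s - t)))\<^sup>2"
    using near
    by eventually_elim (simp add: power_mult_distrib mult.left_commute[of alpha] mult_left_mono)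
qed

lemma regularized_zero_bounds:
  fixes T :: "'c::real_normed_vector \<Rightarrow> 'c"
  assumes T_lower: "\<And>p q. alpha * (norm (p - q))\<^sup>2 \<le> (norm (T p - T q))\<^sup>2"
    and alpha: "0 < alpha" and small: "4 * e\<^sup>2 < alpha"
    and zero: "T zb = 0" and regularized: "T z = - (e *\<^sub>R z)"
  shows "(norm (z - zb))\<^sup>2 \<le> 8 * (norm zb)\<^sup>2 * (e\<^sup>2 / (alpha + e\<^sup>2))"
    and "(norm z)\<^sup>2 \<le> 4 * (norm zb)\<^sup>2"
    and "(norm z)\<^sup>2 \<le> 8 * alpha * (norm zb)\<^sup>2 * (1 / (alpha + e\<^sup>2))"
proof -
  have "alpha * (norm (z - zb))\<^sup>2 \<le> e\<^sup>2 * (norm z)\<^sup>2"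
    using T_lower[of z zb] by (simp add: zero regularized power_mult_distrib)
  then show "(norm (z - zb))\<^sup>2 \<le> 8 * (norm zb)\<^sup>2 * (e\<^sup>2 / (alpha + e\<^sup>2))"
    and "(norm z)\<^sup>2 \<le> 4 * (norm zb)\<^sup>2"
    and "(norm z)\<^sup>2 \<le> 8 * alpha * (norm zb)\<^sup>2 * (1 / (alpha + e\<^sup>2))"
    by (rule regularization_estimate_bounds[OF alpha small])+
qed

lemma regularized_path_derivative_bound:
  fixes T :: "'c::real_normed_vector \<Rightarrow> 'c" and z :: "real \<Rightarrow> 'c"
  assumes T_lower: "\<And>p q. alpha * (norm (p - q))\<^sup>2 \<le> (norm (T p - T q))\<^sup>2"
    and alpha: "0 < alpha" and small: "4 * (e t)\<^sup>2 < alpha" and zero: "T zb = 0"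
    and path: "open U" "t \<in> U" "\<And>s. s \<in> U \<Longrightarrow> T (z s) = - (e s *\<^sub>R z s)"
    and z': "(z has_vector_derivative v) (at t)" and e': "(e has_real_derivative e') (at t)"
  shows "(norm v)\<^sup>2 \<le> 64 * alpha * (norm zb)\<^sup>2 * (e'\<^sup>2 / (alpha + (e t)\<^sup>2)\<^sup>2)"
proof -
  have "\<forall>\<^sub>F s in at t. alpha * (norm (z s - z t))\<^sup>2 \<le> (norm (e s *\<^sub>R z s - e t *\<^sub>R z t))\<^sup>2"
    using eventually_at_in_open'[OF path(1,2)]
  proof eventually_elim
    case (elim s)
    then show ?case
      using T_lower[of "z s" "z t"] by (simp add: path(2,3) norm_minus_commute)
  qed
  then have "alpha * (norm v)\<^sup>2 \<le> (norm (e t *\<^sub>R v + e' *\<^sub>R z t))\<^sup>2"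
    by (rule has_vector_derivative_power2_norm_le[OF z' has_vector_derivative_scaleR[OF e' z']])
  then have "(norm v)\<^sup>2 \<le> 16 * alpha * (norm (z t))\<^sup>2 * (e'\<^sup>2 / (alpha + (e t)\<^sup>2)\<^sup>2)"
    by (rule regularization_derivative_estimate_bound[OF alpha small])
  also have "\<dots> \<le> 16 * alpha * (4 * (norm zb)\<^sup>2) * (e'\<^sup>2 / (alpha + (e t)\<^sup>2)\<^sup>2)"
    using regularized_zero_bounds(2)[OF T_lower alpha small zero path(3)[OF path(2)]] alpha
    by (intro mult_right_mono mult_left_mono) auto
  finally show ?thesis by simp
qed

theorem lemma2p7:
  fixes f :: "'a::{real_inner,complete_space} \<Rightarrow> real"
    and gf :: "'a \<Rightarrow> 'a"
    and A :: "'a \<Rightarrow> 'b::{real_inner,complete_space}"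
    and As :: "'b \<Rightarrow> 'a"
    and b :: 'b
    and eps eps' :: "real \<Rightarrow> real"
    and t0 alpha :: real
    and z :: "real \<Rightarrow> 'a \<times> 'b"
    and xbar :: 'a and lbar :: 'b
  assumes f_convex: "convex_on UNIV f"
    and f_grad: "\<And>x. (f has_derivative (\<lambda>h. inner (gf x) h)) (at x)"
    and gf_cont: "continuous_on UNIV gf"
    and A_lin: "bounded_linear A"
    and As_adj: "\<And>x y. inner (A x) y = inner x (As y)"
    and SM_nonempty: "\<exists>p. saddle_point (lagr f A b) p"
    and eps_pos: "\<And>t. t \<ge> t0 \<Longrightarrow> eps t > 0"
    and eps_deriv: "\<And>t. t \<ge> t0 \<Longrightarrow> (eps has_real_derivative eps' t) (at t within {t0..})"
    and eps'_cont: "continuous_on {t0..} eps'"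
    and eps_lim: "(eps \<longlongrightarrow> 0) at_top"
    and z_saddle: "\<And>t. t \<ge> t0 \<Longrightarrow> saddle_point (lagr_reg f A b (eps t)) (z t)"
    and alpha_pos: "alpha > 0"
    and T_strong: "\<And>p q. (norm (opT gf A As b p - opT gf A As b q))\<^sup>2 \<ge> alpha * (norm (p - q))\<^sup>2"
    and sol: "saddle_point (lagr f A b) (xbar, lbar)"
  shows "(\<lambda>t. (norm (z t))\<^sup>2) \<in> O[at_top](\<lambda>t. 1 / (alpha + (eps t)\<^sup>2)) \<and>
    (\<lambda>t. (norm (z t - (xbar, lbar)))\<^sup>2) \<in> O[at_top](\<lambda>t. (eps t)\<^sup>2 / (alpha + (eps t)\<^sup>2)) \<and>
    (\<exists>C. \<forall>\<^sub>F t in at_top. \<forall>v. (z has_vector_derivative v) (at t) \<longrightarrow>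
           (norm v)\<^sup>2 \<le> C * (\<bar>eps' t\<bar>\<^sup>2 / (alpha + (eps t)\<^sup>2)\<^sup>2))"
proof -
  define zb where "zb = (xbar, lbar)"
  define C where "C = 64 * alpha * (norm zb)\<^sup>2"
  have T_zb: "opT gf A As b zb = 0"
    unfolding zb_def by (rule saddle_point_lagr_imp_opT_eq_0[OF f_grad A_lin As_adj sol])
  have T_z: "opT gf A As b (z s) = - (eps s *\<^sub>R z s)" if "s \<in> {t0<..}" for s
    using saddle_point_lagr_reg_imp_opT[OF f_grad A_lin As_adj z_saddle] that by simp
  have large_t: "\<forall>\<^sub>F t in at_top. t0 < t \<and> 4 * (eps t)\<^sup>2 < alpha"
    using eps_lim by (intro eventually_conj eventually_gt_at_top order_tendstoD(2)[OF _ alpha_pos])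
      (auto intro: tendsto_eq_intros)
  have eps'_at: "(eps has_real_derivative eps' t) (at t)" if "t0 < t" for t
    using eps_deriv[of t] that at_within_interior[of t "{t0..}"] by simp
  note bounds = regularized_zero_bounds[OF T_strong alpha_pos _ T_zb T_z]
  note derivative_bound = regularized_path_derivative_bound[OF T_strong alpha_pos _ T_zb
      open_greaterThan[of t0] _ T_z _ eps'_at]
  have "(norm (z t))\<^sup>2 \<le> 8 * alpha * (norm zb)\<^sup>2 * norm (1 / (alpha + (eps t)\<^sup>2))"
    and "(norm (z t - zb))\<^sup>2 \<le> 8 * (norm zb)\<^sup>2 * norm ((eps t)\<^sup>2 / (alpha + (eps t)\<^sup>2))"
    if "t0 < t" "4 * (eps t)\<^sup>2 < alpha" for t
    using bounds(3,1)[OF that(2)] that(1) add_pos_nonneg[OF alpha_pos zero_le_power2[of "eps t"]]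
    by (simp_all add: abs_of_pos)
  then have "(\<lambda>t. (norm (z t))\<^sup>2) \<in> O[at_top](\<lambda>t. 1 / (alpha + (eps t)\<^sup>2))"
    and "(\<lambda>t. (norm (z t - zb))\<^sup>2) \<in> O[at_top](\<lambda>t. (eps t)\<^sup>2 / (alpha + (eps t)\<^sup>2))"
    using large_t by (auto intro!: bigoI elim!: eventually_mono)
  moreover have "\<forall>\<^sub>F t in at_top. \<forall>v. (z has_vector_derivative v) (at t) \<longrightarrow>
      (norm v)\<^sup>2 \<le> C * (\<bar>eps' t\<bar>\<^sup>2 / (alpha + (eps t)\<^sup>2)\<^sup>2)"
    using large_t
  proof (elim eventually_mono, intro allI impI)
    fix t v
    assume "t0 < t \<and> 4 * (eps t)\<^sup>2 < alpha" and "(z has_vector_derivative v) (at t)"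
    then show "(norm v)\<^sup>2 \<le> C * (\<bar>eps' t\<bar>\<^sup>2 / (alpha + (eps t)\<^sup>2)\<^sup>2)"
      using derivative_bound[where t = t and v = v] by (simp add: C_def)
  qed
  ultimately show ?thesis unfolding zb_def by blast
qed

end
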